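(* Let $t$ be a ground term (well-formed tree) over a ranked alphabet in which no node is labelled with the same unary letter as its father. Apply to $t$: the chain compression for the set of unary letters of $t$; then, for a partition $\Gamma_1,\Gamma_2$ of the set of unary letters of the resulting tree, the $(\Gamma_1,\Gamma_2)$ pair compression, yielding $t'$; then the leaf compression for $(\Gamma_{\ge 1},\Gamma_0)$, where $\Gamma_0$ is the set of constants and $\Gamma_{\ge1}$ the set of other letters of $t'$, yielding $t''$. Then for some partition $\Gamma_1,\Gamma_2$ it holds that $|t''| < \frac{3|t|}{4}$.
   Context: $|t|$ denotes the number of nodes. A tree is well-formed if each node labelled $f$ has exactly $\mathrm{ar}(f)$ ordered children; unary letters have arity $1$, constants arity $0$. For a unary letter $a$, an $a$-maximal chain is a maximal (upward and downward) sequence of nodes $v_1,\dots,v_\ell$ labelled $a$ with $v_{j+1}$ the child of $v_j$. Chain compression for $\Gamma$: simultaneously for all $a\in\Gamma$ and $\ell\ge1$, replace each $a$-maximal chain of length $\ell$ by one node labelled by a fresh unary letter $a_\ell$ (keeping the father and the child). $(\Gamma_1,\Gamma_2)$ pair compression, for disjoint sets of unary letters: every node labelled $a\in\Gamma_1$ whose child is labelled $b\in\Gamma_2$ is merged with that child into a single node labelled by a fresh unary letter $c_{ab}$; done for all such pairs simultaneously. Leaf compression for $(\Gamma_{\ge1},\Gamma_0)$: every node labelled $f\in\Gamma_{\ge1}$ of arity $m$ whose children at exactly the positions $i_1<\dots<i_\ell$ are leaves labelled by constants $a_1,\dots,a_\ell\in\Gamma_0$ is relabelled by a fresh letter $f'$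 (depending on $f,i_1,a_1,\dots,i_\ell,a_\ell$) of arity $m-\ell$ and these children are deleted; done simultaneously for all nodes. All fresh letters are new. *)

theory Defs
  imports Main
begin

datatype 'a tree = Node 'a "'a tree list"

fun root :: "'a tree \<Rightarrow> 'a" where
  "root (Node f ts) = f"

fun children :: "'a tree \<Rightarrow> 'a tree list" where
  "children (Node f ts) = ts"

fun tsize :: "'a tree \<Rightarrow> nat" where
  "tsize (Node f ts) = Suc (sum_list (map tsize ts))"

fun subtrees :: "'a tree \<Rightarrow> 'a tree set" where
  "subtrees (Node f ts) = insert (Node f ts) (\<Union>t\<in>set ts. subtrees t)"

fun wellformed :: "('a \<Rightarrow> nat) \<Rightarrow> 'a tree \<Rightarrow> bool" where
  "wellformed ar (Node f ts) = (length ts = ar f \<and> (\<forall>t\<in>set ts. wellformed ar t))"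

definition letters :: "'a tree \<Rightarrow> 'a set" where
  "letters t = root ` subtrees t"

definition unary_letters :: "('a \<Rightarrow> nat) \<Rightarrow> 'a tree \<Rightarrow> 'a set" where
  "unary_letters ar t = {f \<in> letters t. ar f = 1}"

definition constants :: "('a \<Rightarrow> nat) \<Rightarrow> 'a tree \<Rightarrow> 'a set" where
  "constants ar t = {f \<in> letters t. ar f = 0}"

definition nonconstants :: "('a \<Rightarrow> nat) \<Rightarrow> 'a tree \<Rightarrow> 'a set" where
  "nonconstants ar t = {f \<in> letters t. ar f \<ge> 1}"

definition no_unary_repeat :: "('a \<Rightarrow> nat) \<Rightarrow> 'a tree \<Rightarrow> bool" where
  "no_unary_repeat ar t =
     (\<forall>s\<in>subtrees t. ar (root s) = 1 \<longrightarrow> (\<forall>c\<in>set (children s). root c \<noteq> root s))"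

text \<open>Fresh letters are built by constructors, hence distinct from the original
  letters (Orig) and from each other: ChainL a l is a_l, PairL a b is c_ab,
  LeafL f [(i1,a1),...,(il,al)] is f' (positions counted from 0).\<close>
datatype 'a lab = Orig 'a | ChainL "'a lab" nat | PairL "'a lab" "'a lab"
  | LeafL "'a lab" "(nat \<times> 'a lab) list"

fun lar :: "('a \<Rightarrow> nat) \<Rightarrow> 'a lab \<Rightarrow> nat" where
  "lar ar (Orig f) = ar f"
| "lar ar (ChainL a l) = 1"
| "lar ar (PairL a b) = 1"
| "lar ar (LeafL f ps) = lar ar f - length ps"

fun clen :: "'b \<Rightarrow> 'b tree \<Rightarrow> nat" where
  "clen a (Node b [c]) = (if b = a then Suc (clen a c) else 0)"
| "clen a (Node b ts) = 0"

text \<open>The option argument is the label of the father if the current node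
  continues the father's chain (then it is absorbed into the chain node).\<close>
fun chain_comp' :: "'a lab set \<Rightarrow> 'a lab option \<Rightarrow> 'a lab tree \<Rightarrow> 'a lab tree" where
  "chain_comp' G p (Node f ts) =
     (case ts of
        [c] \<Rightarrow> (if f \<in> G then
                  (if p = Some f then chain_comp' G (Some f) c
                   else Node (ChainL f (clen f (Node f [c]))) [chain_comp' G (Some f) c])
                else Node f [chain_comp' G None c])
      | _ \<Rightarrow> Node f (map (chain_comp' G None) ts))"

definition chain_comp :: "'a lab set \<Rightarrow> 'a lab tree \<Rightarrow> 'a lab tree" where
  "chain_comp G t = chain_comp' G None t"

fun pair_comp :: "'a lab set \<Rightarrow> 'a lab set \<Rightarrow> 'a lab tree \<Rightarrow> 'a lab tree" where
  "pair_comp G1 G2 (Node a ts) =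
     (case ts of
        [Node b us] \<Rightarrow>
          (if a \<in> G1 \<and> b \<in> G2 then Node (PairL a b) (map (pair_comp G1 G2) us)
           else Node a [pair_comp G1 G2 (Node b us)])
      | _ \<Rightarrow> Node a (map (pair_comp G1 G2) ts))"

definition is_const_leaf :: "'b set \<Rightarrow> 'b tree \<Rightarrow> bool" where
  "is_const_leaf G0 s = (children s = [] \<and> root s \<in> G0)"

fun leaf_comp :: "'a lab set \<Rightarrow> 'a lab set \<Rightarrow> 'a lab tree \<Rightarrow> 'a lab tree" where
  "leaf_comp G1 G0 (Node f ts) =
     (let ps = [(i, root (ts ! i)). i \<leftarrow> [0..<length ts], is_const_leaf G0 (ts ! i)] in
      if f \<in> G1 \<and> ps \<noteq> [] then
        Node (LeafL f ps) (map (leaf_comp G1 G0) (filter (\<lambda>s. \<not> is_const_leaf G0 s) ts))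
      else Node f (map (leaf_comp G1 G0) ts))"

end

theory Submission
  imports Defs
begin

text \<open>Without repeated unary letters every maximal chain has length 1, so chain compression
  merely renames letters and the tree keeps its shape. Let \<open>n\<close> be its number of nodes, \<open>L\<close> its
  number of leaves and \<open>E\<close> the number of edges joining two unary nodes. There are fewer
  branching nodes than leaves, and every unary node either sits above another unary node or
  above a leaf or branching node; this gives \<open>n + 2 \<le> 4 L + E\<close>. All \<open>E\<close> edges join distinct
  letters, so a uniformly random partition \<open>(\<Gamma>\<^sub>1, \<Gamma>\<^sub>2)\<close> of the unary letters puts a given edge
  into \<open>\<Gamma>\<^sub>1 \<times> \<Gamma>\<^sub>2\<close> with probability 1/4; fix a partition doing so for at least \<open>E / 4\<close> edges.
  Pair compression then removes one node per such edge, and leaf compression removes all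
  \<open>L\<close> leaves, leaving at most \<open>n - E/4 - L \<le> 3n/4 - 1/2\<close> nodes.\<close>

lemma subtrees_refl: "t \<in> subtrees t"
  by (cases t) auto

lemma subtrees_trans: "s \<in> subtrees t \<Longrightarrow> u \<in> subtrees s \<Longrightarrow> u \<in> subtrees t"
  by (induction t) auto

lemma child_in_subtrees: "c \<in> set ts \<Longrightarrow> c \<in> subtrees (Node f ts)"
  by (auto intro: subtrees_refl)

lemma children_in_subtrees: "s \<in> subtrees t \<Longrightarrow> c \<in> set (children s) \<Longrightarrow> c \<in> subtrees t"
  by (cases s) (auto intro: subtrees_trans child_in_subtrees)

lemma finite_subtrees: "finite (subtrees t)"
  by (induction t) auto

lemma sum_list_add_pointwise:
  "(\<And>x. x \<in> set xs \<Longrightarrow> f x + g x = h x) \<Longrightarrow>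
   sum_list (map f xs) + sum_list (map g xs) = (sum_list (map h xs) :: 'b :: comm_monoid_add)"
  by (simp add: sum_list_addf[symmetric] cong: map_cong)

lemma tsize_children: "tsize t = Suc (\<Sum>c\<leftarrow>children t. tsize c)"
  by (cases t) simp

lemma wellformed_subtree: "wellformed ar t \<Longrightarrow> s \<in> subtrees t \<Longrightarrow> wellformed ar s"
  by (induction t) auto

lemma length_children_wellformed: "wellformed ar s \<Longrightarrow> length (children s) = ar (root s)"
  by (cases s) auto

lemma root_in_letters: "s \<in> subtrees t \<Longrightarrow> root s \<in> letters t"
  unfolding letters_def by auto

lemma letters_subtree: "s \<in> subtrees t \<Longrightarrow> letters s \<subseteq> letters t"
  unfolding letters_def by (auto intro: subtrees_trans)

lemma no_unary_repeat_subtree: "no_unary_repeat ar t \<Longrightarrow> s \<in> subtrees t \<Longrightarrow> no_unary_repeat ar s"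
  unfolding no_unary_repeat_def by (auto intro: subtrees_trans)

lemma subtrees_map_tree: "subtrees (map_tree h t) = map_tree h ` subtrees t"
  by (induction t) auto

lemma root_map_tree: "root (map_tree h s) = h (root s)"
  by (cases s) auto

lemma children_map_tree: "children (map_tree h s) = map (map_tree h) (children s)"
  by (cases s) auto

lemma letters_map_tree: "letters (map_tree h t) = h ` letters t"
  unfolding letters_def subtrees_map_tree by (auto simp: root_map_tree image_image)

lemma tsize_map_tree: "tsize (map_tree h t) = tsize t"
  by (induction t) (simp add: comp_def cong: map_cong)

lemma wellformed_map_tree:
  "(\<And>f. ar' (h f) = ar f) \<Longrightarrow> wellformed ar t \<Longrightarrow> wellformed ar' (map_tree h t)"
  by (induction t) auto

lemma no_unary_repeat_map_tree:
  "inj h \<Longrightarrow> (\<And>f. ar' (h f) = ar f) \<Longrightarrow> no_unary_repeat ar t \<Longrightarrow> no_unary_repeat ar' (map_tree h t)"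
  unfolding no_unary_repeat_def subtrees_map_tree
  by (auto simp: root_map_tree children_map_tree dest: injD)

subsection \<open>Chain compression without repetitions\<close>

lemma clen_other_root: "root s \<noteq> a \<Longrightarrow> clen a s = 0"
  by (induction a s rule: clen.induct) auto

definition chain1_label :: "('a \<Rightarrow> nat) \<Rightarrow> 'a \<Rightarrow> 'a lab" where
  "chain1_label ar f = (if ar f = 1 then ChainL (Orig f) 1 else Orig f)"

lemma lar_chain1_label: "lar ar (chain1_label ar f) = ar f"
  by (simp add: chain1_label_def)

lemma inj_chain1_label: "inj (chain1_label ar)"
  by (rule injI) (auto simp: chain1_label_def split: if_splits)

lemma chain_comp'_no_unary_repeat:
  assumes "wellformed ar s" "no_unary_repeat ar s"
    and "\<forall>f\<in>letters s. Orig f \<in> G \<longleftrightarrow> ar f = 1"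
    and "p \<noteq> Some (Orig (root s))"
  shows "chain_comp' G p (map_tree Orig s) = map_tree (chain1_label ar) s"
  using assms
proof (induction s arbitrary: p)
  case (Node f ts)
  have IH: "chain_comp' G p (map_tree Orig c) = map_tree (chain1_label ar) c"
    if "c \<in> set ts" "p \<noteq> Some (Orig (root c))" for c p
    using Node.IH[OF that(1) _ _ _ that(2)] Node.prems(1-3) that(1)
      no_unary_repeat_subtree letters_subtree child_in_subtrees by (metis subset_iff wellformed.simps)
  have f_letter: "f \<in> letters (Node f ts)"
    using root_in_letters[OF subtrees_refl, of "Node f ts"] by simp
  show ?case
  proof (cases ts rule: remdups_adj.cases)
    case (2 c)
    have unary: "ar f = 1" and "Orig f \<in> G"
      using Node.prems(1,3) f_letter 2 by auto
    moreover have "root c \<noteq> f"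
      using Node.prems(2) unary 2 subtrees_refl unfolding no_unary_repeat_def by fastforce
    ultimately show ?thesis
      using Node.prems(4) 2 IH[of c "Some (Orig f)"]
      by (simp add: clen_other_root root_map_tree chain1_label_def[of ar f])
  qed (use Node.prems(1) IH in \<open>auto simp: chain1_label_def[of ar f]\<close>)
qed

lemma chain_comp_no_unary_repeat:
  assumes "wellformed ar t" "no_unary_repeat ar t"
  shows "chain_comp (unary_letters (lar ar) (map_tree Orig t)) (map_tree Orig t)
           = map_tree (chain1_label ar) t"
  unfolding chain_comp_def
  by (rule chain_comp'_no_unary_repeat[OF assms]) (auto simp: unary_letters_def letters_map_tree)

fun nleaves :: "'b tree \<Rightarrow> nat" where
  "nleaves (Node f ts) = (if ts = [] then 1 else (\<Sum>c\<leftarrow>ts. nleaves c))"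

fun unary_edges :: "'b tree \<Rightarrow> ('b \<times> 'b) list" where
  "unary_edges (Node a ts) =
     (if length ts = 1 \<and> length (children (hd ts)) = 1 then [(a, root (hd ts))] else [])
     @ concat (map unary_edges ts)"

text \<open>The extra summand pays for a unary node whose child is not unary.\<close>
lemma tsize_le_nleaves_unary_edges:
  "tsize s + 3 \<le> 4 * nleaves s + length (unary_edges s) + (if length (children s) = 1 then 1 else 0)"
proof (induction s)
  case (Node f ts)
  show ?case
  proof (cases ts rule: remdups_adj.cases)
    case (2 c)
    then show ?thesis using Node.IH[of c] by (cases "length (children c) = 1") auto
  next
    case (3 c d rest)
    have "(\<Sum>x\<leftarrow>ts. tsize x + 2) \<le> (\<Sum>x\<leftarrow>ts. 4 * nleaves x + length (unary_edges x))"
      by (rule sum_list_mono) (use Node.IH in \<open>fastforce split: if_splits\<close>)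
    then have "(\<Sum>x\<leftarrow>ts. tsize x) + 2 * length ts
        \<le> 4 * (\<Sum>x\<leftarrow>ts. nleaves x) + length (concat (map unary_edges ts))"
      by (simp add: sum_list_Suc sum_list_addf sum_list_const_mult length_concat comp_def)
    moreover have "ts \<noteq> []" "length ts \<ge> 2" using 3 by auto
    ultimately show ?thesis by simp
  qed simp
qed

lemma mem_unary_edges:
  "e \<in> set (unary_edges t) \<Longrightarrow>
     \<exists>s\<in>subtrees t. \<exists>c. children s = [c] \<and> length (children c) = 1 \<and> e = (root s, root c)"
proof (induction t)
  case (Node a ts)
  show ?case
  proof (cases "e \<in> set (concat (map unary_edges ts))")
    case True
    with Node.IH show ?thesis by fastforce
  next
    case False
    then have "length ts = 1 \<and> length (children (hd ts)) = 1 \<and> e = (a, root (hd ts))"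
      using Node.prems by (auto split: if_splits)
    then show ?thesis by (cases ts rule: remdups_adj.cases) (auto intro: subtrees_refl)
  qed
qed

lemma unary_edges_distinct_unary:
  assumes "wellformed ar t" "no_unary_repeat ar t" "(x, y) \<in> set (unary_edges t)"
  shows "x \<in> unary_letters ar t" "y \<in> unary_letters ar t" "x \<noteq> y"
proof -
  obtain s c where s: "s \<in> subtrees t" "children s = [c]" "length (children c) = 1"
    and xy: "x = root s" "y = root c"
    using mem_unary_edges[OF assms(3)] by auto
  have c: "c \<in> subtrees t" using children_in_subtrees[OF s(1)] s(2) by simp
  have "ar x = 1" "ar y = 1"
    using s c xy assms(1) wellformed_subtree length_children_wellformed by fastforce+
  then show "x \<in> unary_letters ar t" "y \<in> unary_letters ar t" "x \<noteq> y"
    using assms(2) s c xy root_in_letters unfolding no_unary_repeat_def unary_letters_def by auto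
qed

fun merged_pairs :: "'b set \<Rightarrow> 'b set \<Rightarrow> 'b tree \<Rightarrow> nat" where
  "merged_pairs G1 G2 (Node a ts) =
     (if length ts = 1 \<and> a \<in> G1 \<and> root (hd ts) \<in> G2 then 1 else 0)
     + (\<Sum>c\<leftarrow>ts. merged_pairs G1 G2 c)"

lemma pair_comp_merge:
  "a \<in> G1 \<Longrightarrow> b \<in> G2 \<Longrightarrow> pair_comp G1 G2 (Node a [Node b us]) = Node (PairL a b) (map (pair_comp G1 G2) us)"
  by simp

lemma pair_comp_keep:
  "\<not> (a \<in> G1 \<and> b \<in> G2) \<Longrightarrow> pair_comp G1 G2 (Node a [Node b us]) = Node a [pair_comp G1 G2 (Node b us)]"
  by simp

lemma pair_comp_not_unary:
  "length ts \<noteq> 1 \<Longrightarrow> pair_comp G1 G2 (Node a ts) = Node a (map (pair_comp G1 G2) ts)"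
  by (cases ts rule: remdups_adj.cases) (auto split: tree.split)

declare pair_comp.simps [simp del]

lemma tsize_pair_comp:
  "G1 \<inter> G2 = {} \<Longrightarrow> tsize (pair_comp G1 G2 t) + merged_pairs G1 G2 t = tsize t"
proof (induction G1 G2 t rule: pair_comp.induct)
  case (1 G1 G2 a ts)
  show ?case
  proof (cases ts rule: remdups_adj.cases)
    case (2 c)
    obtain b us where c: "c = Node b us" by (cases c)
    show ?thesis
    proof (cases "a \<in> G1 \<and> b \<in> G2")
      case True
      then have "b \<notin> G1" using "1.prems" by blast
      moreover have "(\<Sum>x\<leftarrow>us. tsize (pair_comp G1 G2 x)) + (\<Sum>x\<leftarrow>us. merged_pairs G1 G2 x) = (\<Sum>x\<leftarrow>us. tsize x)"
        by (rule sum_list_add_pointwise) (use "1.IH"(2)[OF 2 c] True "1.prems" in auto)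
      ultimately show ?thesis
        using True 2 c by (simp add: pair_comp_merge comp_def)
    next
      case False
      then show ?thesis using "1.IH"(3)[OF 2 c] "1.prems" 2 c by (simp add: pair_comp_keep)
    qed
  next
    case (3 c d rest)
    obtain b us where c: "c = Node b us" by (cases c)
    have "(\<Sum>x\<leftarrow>ts. tsize (pair_comp G1 G2 x)) + (\<Sum>x\<leftarrow>ts. merged_pairs G1 G2 x) = (\<Sum>x\<leftarrow>ts. tsize x)"
      by (rule sum_list_add_pointwise) (use "1.IH"(4)[OF 3[unfolded c] refl] "1.prems" 3 c in blast)
    moreover have "length ts \<noteq> 1" using 3 by simp
    ultimately show ?thesis by (simp add: pair_comp_not_unary comp_def)
  qed (simp add: pair_comp_not_unary)
qed

lemma nleaves_pair_comp:
  "\<forall>s\<in>subtrees t. root s \<in> G2 \<longrightarrow> children s \<noteq> [] \<Longrightarrow> nleaves (pair_comp G1 G2 t) = nleaves t"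
proof (induction G1 G2 t rule: pair_comp.induct)
  case (1 G1 G2 a ts)
  have prems: "\<forall>s\<in>subtrees c. root s \<in> G2 \<longrightarrow> children s \<noteq> []" if "c \<in> set ts" for c
    using "1.prems" that by auto
  show ?case
  proof (cases ts rule: remdups_adj.cases)
    case (2 c)
    obtain b us where c: "c = Node b us" by (cases c)
    show ?thesis
    proof (cases "a \<in> G1 \<and> b \<in> G2")
      case True
      have "us \<noteq> []" using "1.prems" True 2 c by (auto intro: subtrees_refl)
      moreover have "nleaves (pair_comp G1 G2 x) = nleaves x" if "x \<in> set us" for x
        using "1.IH"(2)[OF 2 c] True prems[of c] 2 c that by (auto intro: subtrees_refl)
      ultimately show ?thesis
        using True 2 c by (simp add: pair_comp_merge cong: map_cong)
    next
      case False
      then show ?thesis using "1.IH"(3)[OF 2 c] prems[of c] 2 c by (simp add: pair_comp_keep)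
    qed
  next
    case (3 c d rest)
    obtain b us where c: "c = Node b us" by (cases c)
    have "nleaves (pair_comp G1 G2 x) = nleaves x" if "x \<in> set ts" for x
      using "1.IH"(4)[OF 3[unfolded c] refl] prems 3 c that by blast
    moreover have "ts \<noteq> []" "length ts \<noteq> 1" using 3 by auto
    ultimately show ?thesis by (simp add: pair_comp_not_unary cong: map_cong)
  qed (simp add: pair_comp_not_unary)
qed

lemma children_pair_comp_ne_Nil:
  "\<forall>s\<in>subtrees t. root s \<in> G2 \<longrightarrow> children s \<noteq> [] \<Longrightarrow> children t \<noteq> [] \<Longrightarrow>
   children (pair_comp G1 G2 t) \<noteq> []"
  by (cases t) (auto simp: pair_comp.simps split: list.splits tree.splits)

lemma wellformed_pair_comp:
  "G2 \<subseteq> {f. lar ar f = 1} \<Longrightarrow> wellformed (lar ar) t \<Longrightarrow> wellformed (lar ar) (pair_comp G1 G2 t)"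
proof (induction G1 G2 t rule: pair_comp.induct)
  case (1 G1 G2 a ts)
  show ?case
  proof (cases ts rule: remdups_adj.cases)
    case (2 c)
    obtain b us where c: "c = Node b us" by (cases c)
    show ?thesis
    proof (cases "a \<in> G1 \<and> b \<in> G2")
      case True
      then show ?thesis using "1.IH"(2)[OF 2 c] "1.prems" 2 c by (auto simp: pair_comp_merge)
    next
      case False
      then show ?thesis using "1.IH"(3)[OF 2 c] "1.prems" 2 c by (simp add: pair_comp_keep)
    qed
  next
    case (3 c d rest)
    obtain b us where c: "c = Node b us" by (cases c)
    show ?thesis using "1.IH"(4)[OF 3[unfolded c] refl] "1.prems" 3 c by (simp add: pair_comp_not_unary)
  qed (use "1.prems" in \<open>simp add: pair_comp_not_unary\<close>)
qed

lemma merged_pairs_eq_unary_edges: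
  "\<forall>s\<in>subtrees t. root s \<in> G2 \<longrightarrow> length (children s) = 1 \<Longrightarrow>
   merged_pairs G1 G2 t = length (filter (\<lambda>e. fst e \<in> G1 \<and> snd e \<in> G2) (unary_edges t))"
proof (induction t)
  case (Node a ts)
  have "merged_pairs G1 G2 x = length (filter (\<lambda>e. fst e \<in> G1 \<and> snd e \<in> G2) (unary_edges x))"
    if "x \<in> set ts" for x
    using Node that by auto
  then have children: "(\<Sum>x\<leftarrow>ts. merged_pairs G1 G2 x) =
      length (filter (\<lambda>e. fst e \<in> G1 \<and> snd e \<in> G2) (concat (map unary_edges ts)))"
    by (induction ts) auto
  have root: "(if length ts = 1 \<and> a \<in> G1 \<and> root (hd ts) \<in> G2 then 1 else 0) =
      length (filter (\<lambda>e. fst e \<in> G1 \<and> snd e \<in> G2)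
        (if length ts = 1 \<and> length (children (hd ts)) = 1 then [(a, root (hd ts))] else []))"
  proof (cases ts rule: remdups_adj.cases)
    case (2 c)
    then show ?thesis using Node.prems subtrees_refl[of c] by auto
  qed auto
  show ?case using children root by simp
qed

lemma concat_map_if_singleton: "[f i. i \<leftarrow> xs, P i] = map f (filter P xs)"
  by (induction xs) auto

lemma const_leaf_positions_Nil_iff:
  "[(i, root (ts ! i)). i \<leftarrow> [0..<length ts], is_const_leaf G0 (ts ! i)] = [] \<longleftrightarrow>
   (\<forall>s\<in>set ts. \<not> is_const_leaf G0 s)"
  unfolding concat_map_if_singleton by (auto simp: filter_empty_conv all_set_conv_all_nth)

lemma children_leaf_comp:
  assumes "f \<in> G1"
  shows "children (leaf_comp G1 G0 (Node f ts)) = map (leaf_comp G1 G0) (filter (\<lambda>s. \<not> is_const_leaf G0 s) ts)"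
  using const_leaf_positions_Nil_iff[of G0 ts]
  by (simp only: leaf_comp.simps[of G1 G0 f ts] Let_def assms simp_thms)
    (auto simp: filter_id_conv simp del: leaf_comp.simps)

declare leaf_comp.simps [simp del]

lemma tsize_leaf_comp:
  assumes "\<forall>s\<in>subtrees t. children s \<noteq> [] \<longrightarrow> root s \<in> G1"
    and "\<forall>s\<in>subtrees t. children s = [] \<longrightarrow> root s \<in> G0"
    and "children t \<noteq> []"
  shows "tsize (leaf_comp G1 G0 t) + nleaves t = tsize t"
  using assms
proof (induction t)
  case (Node f ts)
  have "f \<in> G1" using Node.prems(1,3) subtrees_refl[of "Node f ts"] by fastforce
  have const_leaf: "is_const_leaf G0 x \<longleftrightarrow> children x = []" if "x \<in> set ts" for x
    using Node.prems(2) that subtrees_refl[of x] by (auto simp: is_const_leaf_def)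
  have "(if children x \<noteq> [] then tsize (leaf_comp G1 G0 x) else 0) + nleaves x = tsize x"
    if "x \<in> set ts" for x
  proof (cases "children x = []")
    case False
    have "\<forall>s\<in>subtrees x. children s \<noteq> [] \<longrightarrow> root s \<in> G1" "\<forall>s\<in>subtrees x. children s = [] \<longrightarrow> root s \<in> G0"
      using Node.prems(1,2) that by auto
    with Node.IH[OF that] False show ?thesis by simp
  qed (cases x, simp)
  then have "(\<Sum>x\<leftarrow>ts. if children x \<noteq> [] then tsize (leaf_comp G1 G0 x) else 0) + (\<Sum>x\<leftarrow>ts. nleaves x)
      = (\<Sum>x\<leftarrow>ts. tsize x)"
    by (rule sum_list_add_pointwise)
  then have "(\<Sum>x\<leftarrow>filter (\<lambda>x. children x \<noteq> []) ts. tsize (leaf_comp G1 G0 x)) + nleaves (Node f ts)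
      = (\<Sum>x\<leftarrow>ts. tsize x)"
    using Node.prems(3) by (simp add: sum_list_map_filter')
  moreover have "filter (\<lambda>s. \<not> is_const_leaf G0 s) ts = filter (\<lambda>x. children x \<noteq> []) ts"
    using const_leaf by (auto intro: filter_cong)
  ultimately show ?case
    using children_leaf_comp[OF \<open>f \<in> G1\<close>] tsize_children[of "leaf_comp G1 G0 (Node f ts)"]
    by (simp add: comp_def)
qed

subsection \<open>A partition cutting a quarter of the edges\<close>

lemma card_Pow_separating:
  assumes "finite U" "x \<in> U" "y \<in> U" "x \<noteq> y"
  shows "4 * card {S \<in> Pow U. x \<in> S \<and> y \<notin> S} = card (Pow U)"
proof -
  have "{S \<in> Pow U. x \<in> S \<and> y \<notin> S} = insert x ` Pow (U - {x, y})"
    using assms by (auto intro!: image_eqI[of _ "insert x" "_ - {x}"])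
  moreover have "inj_on (insert x) (Pow (U - {x, y}))"
    by (rule inj_onI) (use insert_ident in blast)
  moreover obtain m where "card U = m + 2"
    using assms card_mono[of U "{x, y}"] by (metis card_2_iff empty_subsetI insert_subset le_add_diff_inverse2)
  moreover have "card (U - {x, y}) = card U - 2"
    using assms by (simp add: card_Diff_subset)
  ultimately show ?thesis
    using assms by (simp add: card_Pow card_image power_add)
qed

lemma sum_Pow_cut_edges:
  assumes "finite U" "\<forall>(x, y)\<in>set es. x \<in> U \<and> y \<in> U \<and> x \<noteq> y"
  shows "4 * (\<Sum>S\<in>Pow U. length (filter (\<lambda>e. fst e \<in> S \<and> snd e \<in> U - S) es)) = length es * card (Pow U)"
  using assms(2)
proof (induction es)
  case (Cons e es)
  obtain x y where e: "e = (x, y)" by (cases e)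
  have xy: "x \<in> U" "y \<in> U" "x \<noteq> y" using Cons.prems e by auto
  have "(\<Sum>S\<in>Pow U. (if x \<in> S \<and> y \<in> U - S then 1 else 0 :: nat)) = card {S \<in> Pow U. x \<in> S \<and> y \<notin> S}"
    using assms(1) xy by (simp add: sum.If_cases Int_def conj_commute)
  then have "4 * (\<Sum>S\<in>Pow U. (if x \<in> S \<and> y \<in> U - S then 1 else 0 :: nat)) = card (Pow U)"
    using card_Pow_separating[OF assms(1) xy] by simp
  moreover have "(\<Sum>S\<in>Pow U. length (filter (\<lambda>e. fst e \<in> S \<and> snd e \<in> U - S) (e # es))) =
      (\<Sum>S\<in>Pow U. (if x \<in> S \<and> y \<in> U - S then 1 else 0 :: nat))
      + (\<Sum>S\<in>Pow U. length (filter (\<lambda>e. fst e \<in> S \<and> snd e \<in> U - S) es))"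
    unfolding sum.distrib[symmetric] by (rule sum.cong) (auto simp: e)
  ultimately show ?case
    using Cons by (simp add: distrib_left)
qed simp

lemma exists_quarter_cut:
  assumes "finite U" "\<forall>(x, y)\<in>set es. x \<in> U \<and> y \<in> U \<and> x \<noteq> y"
  shows "\<exists>S\<subseteq>U. length es \<le> 4 * length (filter (\<lambda>e. fst e \<in> S \<and> snd e \<in> U - S) es)"
proof (rule ccontr)
  let ?cut = "\<lambda>S. length (filter (\<lambda>e. fst e \<in> S \<and> snd e \<in> U - S) es)"
  assume "\<not> ?thesis"
  then have "(\<Sum>S\<in>Pow U. 4 * ?cut S) < (\<Sum>S\<in>Pow U. length es)"
    using assms(1) by (intro sum_strict_mono) auto
  then show False
    using sum_Pow_cut_edges[OF assms] by (simp add: sum_distrib_left mult.commute)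
qed

lemma pair_leaf_comp_shrinks:
  fixes t :: "'a lab tree"
  assumes wf: "wellformed (lar ar) t" and nur: "no_unary_repeat (lar ar) t" and size: "tsize t \<ge> 2"
  shows "\<exists>G1 G2. G1 \<inter> G2 = {} \<and> G1 \<union> G2 = unary_letters (lar ar) t \<and>
      (let t' = pair_comp G1 G2 t;
           t'' = leaf_comp (nonconstants (lar ar) t') (constants (lar ar) t') t'
       in 4 * tsize t'' < 3 * tsize t)"
proof -
  let ?U = "unary_letters (lar ar) t"
  have arity: "length (children s) = lar ar (root s)" if "s \<in> subtrees t" for s
    using wf that wellformed_subtree length_children_wellformed by blast
  have "finite ?U"
    unfolding unary_letters_def letters_def using finite_subtrees[of t] by simp
  moreover have "\<forall>(x, y)\<in>set (unary_edges t). x \<in> ?U \<and> y \<in> ?U \<and> x \<noteq> y"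
    using unary_edges_distinct_unary[OF wf nur] by blast
  ultimately obtain S where "S \<subseteq> ?U"
    and quarter: "length (unary_edges t) \<le> 4 * length (filter (\<lambda>e. fst e \<in> S \<and> snd e \<in> ?U - S) (unary_edges t))"
    by (blast dest: exists_quarter_cut)
  define G1 where "G1 = S"
  define G2 where "G2 = ?U - S"
  define t' where "t' = pair_comp G1 G2 t"
  define t'' where "t'' = leaf_comp (nonconstants (lar ar) t') (constants (lar ar) t') t'"
  have partition: "G1 \<inter> G2 = {}" "G1 \<union> G2 = ?U"
    using \<open>S \<subseteq> ?U\<close> unfolding G1_def G2_def by auto
  have G2_unary: "\<forall>s\<in>subtrees t. root s \<in> G2 \<longrightarrow> length (children s) = 1"
    using arity unfolding G2_def unary_letters_def by auto
  have "length (unary_edges t) \<le> 4 * merged_pairs G1 G2 t"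
    unfolding merged_pairs_eq_unary_edges[OF G2_unary] using quarter by (simp only: G1_def G2_def)
  moreover have "tsize t' + merged_pairs G1 G2 t = tsize t"
    unfolding t'_def by (rule tsize_pair_comp[OF partition(1)])
  moreover have G2_inner: "\<forall>s\<in>subtrees t. root s \<in> G2 \<longrightarrow> children s \<noteq> []"
    using G2_unary by fastforce
  then have "nleaves t' = nleaves t"
    unfolding t'_def by (rule nleaves_pair_comp)
  moreover have "tsize t'' + nleaves t' = tsize t'"
  proof -
    have "G2 \<subseteq> {f. lar ar f = 1}"
      unfolding G2_def unary_letters_def by auto
    then have "wellformed (lar ar) t'"
      unfolding t'_def using wf by (rule wellformed_pair_comp)
    then have arity': "length (children s) = lar ar (root s)" if "s \<in> subtrees t'" for s
      using that wellformed_subtree length_children_wellformed by blast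
    have "children t \<noteq> []" using size by (cases t) auto
    then have "children t' \<noteq> []"
      unfolding t'_def using G2_inner by (intro children_pair_comp_ne_Nil)
    moreover have "\<forall>s\<in>subtrees t'. children s \<noteq> [] \<longrightarrow> root s \<in> nonconstants (lar ar) t'"
    proof (intro ballI impI)
      fix s assume s: "s \<in> subtrees t'" "children s \<noteq> []"
      then show "root s \<in> nonconstants (lar ar) t'"
        using arity'[OF s(1)] root_in_letters[OF s(1)] unfolding nonconstants_def by (cases "children s") auto
    qed
    moreover have "\<forall>s\<in>subtrees t'. children s = [] \<longrightarrow> root s \<in> constants (lar ar) t'"
      using arity' root_in_letters unfolding constants_def by fastforce
    ultimately show ?thesis
      unfolding t''_def by (intro tsize_leaf_comp)
  qed
  moreover have "tsize t + 2 \<le> 4 * nleaves t + length (unary_edges t)"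
    using tsize_le_nleaves_unary_edges[of t] by (simp split: if_splits)
  ultimately have "4 * tsize t'' < 3 * tsize t" by linarith
  then show ?thesis using partition unfolding t''_def t'_def Let_def by blast
qed

theorem lemma2p3:
  fixes ar :: "'a \<Rightarrow> nat" and t :: "'a tree"
  assumes "wellformed ar t"
    and "no_unary_repeat ar t"
    and "tsize t \<ge> 2"
  shows "let t0 = map_tree Orig t;
             tc = chain_comp (unary_letters (lar ar) t0) t0
         in \<exists>G1 G2. G1 \<inter> G2 = {} \<and> G1 \<union> G2 = unary_letters (lar ar) tc \<and>
              (let t' = pair_comp G1 G2 tc;
                   t'' = leaf_comp (nonconstants (lar ar) t') (constants (lar ar) t') t'
               in 4 * tsize t'' < 3 * tsize t)"
proof -
  let ?tc = "map_tree (chain1_label ar) t"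
  have "wellformed (lar ar) ?tc"
    using wellformed_map_tree[of "lar ar" "chain1_label ar", OF lar_chain1_label assms(1)] .
  moreover have "no_unary_repeat (lar ar) ?tc"
    using no_unary_repeat_map_tree[of "chain1_label ar" "lar ar", OF inj_chain1_label lar_chain1_label assms(2)] .
  moreover have "tsize ?tc = tsize t"
    by (rule tsize_map_tree)
  ultimately show ?thesis
    using pair_leaf_comp_shrinks[of ar ?tc] assms chain_comp_no_unary_repeat[OF assms(1,2)]
    unfolding Let_def by simp
qed

end
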